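(* Let $m,n\in\mathbb N$, $a\in\mathbb C\setminus\mathbb Z$, $b_1,\dots,b_m\in\mathbb C$, $c_1,\dots,c_m\in\mathbb C\setminus\{0,-1,-2,\dots\}$. Then, as an identity of formal power series in $x=(x_1,\dots,x_m)$, $y=(y_1,\dots,y_n)$, $$\mathrm H_A^{(m,n)}(a,b;c;x,y)=F_A^{(m)}(a,b;c;x)\,J^{(n)}_{-a}(y)+\sum_{k=1}^\infty\sum_{l=1}^k\sum_{\substack{i\in\mathbb Z_{\ge0}^m,\ |i|=k\\ j\in\mathbb Z_{\ge0}^n,\ |j|=l}}\frac{(-1)^{k+l}\,k!\,(k-1)!\,(b)_i}{(l-1)!\,(k-l)!\,(1-a)_l\,(c)_i}\,\frac{x^i}{i!}\frac{y^j}{j!}\,F_A^{(m)}(a+k,b+i;c+i;x)\,J^{(n)}_{-a+l}(y),$$ where $F_A^{(m)}(a+k,b+i;c+i;x)$ means $F_A^{(m)}(a+k,b_1+i_1,\dots,b_m+i_m;c_1+i_1,\dots,c_m+i_m;x)$.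
   Context: Multi-index notation: for $i=(i_1,\dots,i_m)\in\mathbb Z_{\ge0}^m$, $x^i=x_1^{i_1}\cdots x_m^{i_m}$, $i!=i_1!\cdots i_m!$, $|i|=i_1+\dots+i_m$; similarly for $j\in\mathbb Z_{\ge0}^n$ and $y$. Pochhammer symbol $(\lambda)_k=\Gamma(\lambda+k)/\Gamma(\lambda)$ for every integer $k$; $(b)_i:=\prod_{s=1}^m(b_s)_{i_s}$, $(c)_i:=\prod_{s=1}^m(c_s)_{i_s}$. Lauricella function $F_A^{(m)}(a,b;c;x)=F_A^{(m)}(a,b_1,\dots,b_m;c_1,\dots,c_m;x)=\sum_{i\in\mathbb Z_{\ge0}^m}\frac{(a)_{|i|}(b)_i}{(c)_i}\frac{x^i}{i!}$. Bessel function of $n$ variables $J^{(n)}_\alpha(y)=\sum_{j\in\mathbb Z_{\ge0}^n}\frac{(-1)^{|j|}}{(1+\alpha)_{|j|}}\frac{y^j}{j!}$. Confluent function $\mathrm H_A^{(m,n)}(a,b;c;x,y)=\sum_{i\in\mathbb Z_{\ge0}^m,\,j\in\mathbb Z_{\ge0}^n}\frac{(a)_{|i|-|j|}(b)_i}{(c)_i}\frac{x^i}{i!}\frac{y^j}{j!}$. All functions are regarded as formal power series; the infinite sum converges in the formal (degree) topology. *)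

theory Defs
  imports Complex_Main
begin

text \<open>A formal power series in x=(x_0..x_{m-1}),
y=(y_0..y_{n-1}) is represented by its coefficient function (i,j) |-> coefficient
of x^i y^j; only multi-indices in MI m resp. MI n are meaningful.\<close>

type_synonym mi = "nat \<Rightarrow> nat"
type_synonym ser = "mi \<Rightarrow> mi \<Rightarrow> complex"

definition MI :: "nat \<Rightarrow> mi set" where
  "MI m = {i. \<forall>s\<ge>m. i s = 0}"

definition absi :: "nat \<Rightarrow> mi \<Rightarrow> nat" where
  "absi m i = (\<Sum>s<m. i s)"

definition mfact :: "nat \<Rightarrow> mi \<Rightarrow> complex" where
  "mfact m i = (\<Prod>s<m. fact (i s))"

definition pochv :: "nat \<Rightarrow> (nat \<Rightarrow> complex) \<Rightarrow> mi \<Rightarrow> complex" where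
  "pochv m b i = (\<Prod>s<m. pochhammer (b s) (i s))"

text \<open>Pochhammer symbol with integer index: (lambda)_k = Gamma(lambda+k)/Gamma(lambda).\<close>
definition poch_int :: "complex \<Rightarrow> int \<Rightarrow> complex" where
  "poch_int z k = (if k \<ge> 0 then pochhammer z (nat k)
                   else inverse (pochhammer (z + of_int k) (nat (- k))))"

definition ser_mult :: "ser \<Rightarrow> ser \<Rightarrow> ser" where
  "ser_mult f g = (\<lambda>i j. \<Sum>p \<in> {i'. \<forall>s. i' s \<le> i s} \<times> {j'. \<forall>s. j' s \<le> j s}.
       f (fst p) (snd p) * g (\<lambda>s. i s - fst p s) (\<lambda>s. j s - snd p s))"

definition monom :: "mi \<Rightarrow> mi \<Rightarrow> complex \<Rightarrow> ser" where
  "monom i0 j0 z = (\<lambda>i j. if i = i0 \<and> j = j0 then z else 0)"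

definition ser_eq :: "nat \<Rightarrow> nat \<Rightarrow> ser \<Rightarrow> ser \<Rightarrow> bool" where
  "ser_eq m n f g \<longleftrightarrow> (\<forall>i\<in>MI m. \<forall>j\<in>MI n. f i j = g i j)"

definition ser_sums :: "nat \<Rightarrow> nat \<Rightarrow> (nat \<Rightarrow> ser) \<Rightarrow> ser \<Rightarrow> bool" where
  "ser_sums m n T S \<longleftrightarrow> (\<forall>i\<in>MI m. \<forall>j\<in>MI n. \<exists>N. \<forall>K\<ge>N. (\<Sum>k\<in>{1..K}. T k i j) = S i j)"

definition lauricellaFA :: "nat \<Rightarrow> complex \<Rightarrow> (nat \<Rightarrow> complex) \<Rightarrow> (nat \<Rightarrow> complex) \<Rightarrow> ser" where
  "lauricellaFA m a b c = (\<lambda>i j. if (\<forall>s. j s = 0)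
       then pochhammer a (absi m i) * pochv m b i / pochv m c i / mfact m i else 0)"

definition besselJ :: "nat \<Rightarrow> complex \<Rightarrow> ser" where
  "besselJ n \<alpha> = (\<lambda>i j. if (\<forall>s. i s = 0)
       then (-1) ^ absi n j / pochhammer (1 + \<alpha>) (absi n j) / mfact n j else 0)"

definition confluentHA :: "nat \<Rightarrow> nat \<Rightarrow> complex \<Rightarrow> (nat \<Rightarrow> complex) \<Rightarrow> (nat \<Rightarrow> complex) \<Rightarrow> ser" where
  "confluentHA m n a b c = (\<lambda>i j.
       poch_int a (int (absi m i) - int (absi n j)) * pochv m b i / pochv m c i
       / mfact m i / mfact n j)"

end

theory Submission
  imports Defs "HOL-Computational_Algebra.Formal_Power_Series"
begin

(* Compare the coefficients of x^i y^j, writing K = |i| and L = |j|. Every summand on the right is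
   a monomial times a series in x alone times a series in y alone, so its coefficient is a single
   product of Pochhammer symbols and factorials. Summing over the multi-indices i0, j0 of degrees
   k and l turns the products of binomial coefficients C(i, i0), C(j, j0) into C(K, k) and C(L, l)
   (multivariate Vandermonde), and the sum over l collapses to (L)_k. The coefficient of F_A J is
   the missing k = 0 term, so the theorem reduces to
     (a)_(K-L) = (-1)^L / (1-a)_L * Sum_(k<=K) (-1)^k C(K, k) (L)_k (a+k)_(K-k),
   which is the Chu-Vandermonde identity 2F1(-K, L; a; 1) = (a-L)_K / (a)_K combined with
   (a-L)_K = (a-L)_L (a)_(K-L) and (a-L)_L = (-1)^L (1-a)_L. *)

lemma pochhammer_shift_nonzero:
  fixes a :: complex
  assumes "a \<notin> \<int>"
  shows "pochhammer (a + of_int t) k \<noteq> 0"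
proof
  assume "pochhammer (a + of_int t) k = 0"
  then obtain j :: nat where "a + of_int t = - of_nat j"
    by (auto simp: pochhammer_eq_0_iff)
  then have "a = of_int (- t - int j)"
    by (simp add: algebra_simps eq_neg_iff_add_eq_0)
  with assms show False
    by (metis Ints_of_int)
qed

lemma pochhammer_minus_of_nat:
  assumes "k \<le> K"
  shows "pochhammer (- of_nat K :: 'a :: field_char_0) k = (-1)^k * of_nat (K choose k) * fact k"
proof -
  have "pochhammer (- of_nat K :: 'a) k = (-1)^k * pochhammer (of_nat K - of_nat k + 1) k"
    by (simp add: pochhammer_minus)
  moreover have "(of_nat K gchoose k :: 'a) = pochhammer (of_nat K - of_nat k + 1) k / fact k"
    by (rule gbinomial_pochhammer')
  ultimately show ?thesis
    by (simp add: binomial_gbinomial)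
qed

lemma sum_binomial_eq_pochhammer:
  assumes "1 \<le> k"
  shows "(\<Sum>l\<in>{1..k}. fact k * fact (k - 1) / (fact (l - 1) * fact (k - l)) * of_nat (L choose l))
    = (pochhammer (of_nat L) k :: 'a :: field_char_0)"
proof -
  have "fact k * fact (k - 1) / (fact (l - 1) * fact (k - l)) * of_nat (L choose l)
      = (fact k * of_nat ((L choose l) * ((k - 1) choose (k - l))) :: 'a)"
    if "l \<in> {1..k}" for l
  proof -
    have "k - 1 - (l - 1) = k - l" and "l - 1 \<le> k - 1"
      using that by auto
    then have "fact (l - 1) * fact (k - l) * ((k - 1) choose (k - l)) = fact (k - 1)"
      using binomial_fact_lemma[of "l - 1" "k - 1"] binomial_symmetric[of "l - 1" "k - 1"] by simp
    then have "(fact (k - 1) :: 'a) = fact (l - 1) * fact (k - l) * of_nat ((k - 1) choose (k - l))"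
      by (metis of_nat_fact of_nat_mult)
    then show ?thesis
      by (simp add: field_simps)
  qed
  then have "(\<Sum>l\<in>{1..k}. fact k * fact (k - 1) / (fact (l - 1) * fact (k - l)) * of_nat (L choose l))
      = (fact k * of_nat (\<Sum>l\<in>{1..k}. (L choose l) * ((k - 1) choose (k - l))) :: 'a)"
    by (simp add: sum_distrib_left)
  also have "(\<Sum>l\<in>{1..k}. (L choose l) * ((k - 1) choose (k - l)))
      = (\<Sum>l\<le>k. (L choose l) * ((k - 1) choose (k - l)))"
    using assms by (simp add: atMost_atLeast0 sum.atLeast_Suc_atMost)
  also have "\<dots> = (L + (k - 1)) choose k"
    by (rule vandermonde)
  also have "fact k * of_nat ((L + (k - 1)) choose k) = (pochhammer (of_nat L) k :: 'a)"
  proof -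
    have shift: "(of_nat (L + (k - 1)) - of_nat k + 1 :: 'a) = of_nat L"
      using assms by simp
    have "(of_nat (L + (k - 1)) gchoose k :: 'a) = pochhammer (of_nat L) k / fact k"
      using gbinomial_pochhammer'[of "of_nat (L + (k - 1)) :: 'a" k] unfolding shift .
    then show ?thesis
      by (simp add: binomial_gbinomial del: of_nat_add)
  qed
  finally show ?thesis .
qed

lemma chu_vandermonde_binomial:
  fixes a :: complex
  assumes "a \<notin> \<int>"
  shows "(\<Sum>k\<le>K. (-1)^k * of_nat (K choose k) * pochhammer (of_nat L) k * pochhammer (a + of_nat k) (K - k))
    = pochhammer (a - of_nat L) K"
proof -
  have nonzero: "pochhammer a k \<noteq> 0" for k
    using pochhammer_shift_nonzero[OF assms, of 0] by simp
  have "\<forall>i\<in>{0..<K}. a \<noteq> - of_nat i"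
    using assms by (metis Ints_minus Ints_of_nat)
  from Vandermonde_pochhammer[OF this, of "of_nat L"]
  have Vandermonde_sum: "(\<Sum>k\<le>K. pochhammer (of_nat L) k * pochhammer (- of_nat K) k / (fact k * pochhammer a k))
      = pochhammer (a - of_nat L) K / pochhammer a K"
    by (simp add: atMost_atLeast0)
  have "(-1)^k * of_nat (K choose k) * pochhammer (of_nat L) k * pochhammer (a + of_nat k) (K - k)
      = pochhammer a K * (pochhammer (of_nat L) k * pochhammer (- of_nat K) k / (fact k * pochhammer a k))"
    if "k \<le> K" for k
    unfolding pochhammer_product[OF that, of a] pochhammer_minus_of_nat[OF that]
    using nonzero[of k] by (simp add: field_simps)
  then have "(\<Sum>k\<le>K. (-1)^k * of_nat (K choose k) * pochhammer (of_nat L) k * pochhammer (a + of_nat k) (K - k))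
      = pochhammer a K * (\<Sum>k\<le>K. pochhammer (of_nat L) k * pochhammer (- of_nat K) k / (fact k * pochhammer a k))"
    by (simp add: sum_distrib_left)
  also have "\<dots> = pochhammer (a - of_nat L) K"
    using Vandermonde_sum nonzero[of K] by simp
  finally show ?thesis .
qed

lemma poch_int_diff:
  fixes a :: complex
  assumes "a \<notin> \<int>"
  shows "poch_int a (int K - int L) = pochhammer (a - of_nat L) K * (-1)^L / pochhammer (1 - a) L"
proof -
  have "1 - a \<notin> \<int>"
  proof
    assume "1 - a \<in> \<int>"
    then have "1 - (1 - a) \<in> \<int>"
      by (intro Ints_diff) auto
    with assms show False
      by simp
  qed
  then have nonzero: "pochhammer (1 - a) L \<noteq> 0"
    using pochhammer_shift_nonzero[of "1 - a" 0 L] by simp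
  have reflect: "pochhammer (a - of_nat L) L = (-1)^L * pochhammer (1 - a) L"
    using pochhammer_minus[of "a - 1" L] by (simp add: algebra_simps)
  have sign: "(-1 :: complex)^L * (-1)^L = 1"
    by (simp flip: power_mult_distrib)
  show ?thesis
  proof (cases "L \<le> K")
    case True
    then have "pochhammer (a - of_nat L) K * (-1)^L / pochhammer (1 - a) L
        = pochhammer a (K - L) * ((-1)^L * (-1)^L) * (pochhammer (1 - a) L / pochhammer (1 - a) L)"
      by (simp add: pochhammer_product reflect)
    also have "\<dots> = poch_int a (int K - int L)"
      using True nonzero sign by (simp add: poch_int_def nat_diff_distrib)
    finally show ?thesis ..
  next
    case False
    define D where "D = pochhammer (a + of_nat K - of_nat L) (L - K)"
    have "D \<noteq> 0"
      using pochhammer_shift_nonzero[OF assms, of "int K - int L"] by (simp add: D_def algebra_simps)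
    moreover have "pochhammer (a - of_nat L) L = pochhammer (a - of_nat L) K * D"
      using False pochhammer_product[of K L "a - of_nat L"] by (simp add: D_def algebra_simps)
    ultimately have "pochhammer (a - of_nat L) K = (-1)^L * pochhammer (1 - a) L / D"
      by (simp add: reflect eq_divide_eq)
    then have "pochhammer (a - of_nat L) K * (-1)^L / pochhammer (1 - a) L
        = ((-1)^L * (-1)^L) * (pochhammer (1 - a) L / pochhammer (1 - a) L) / D"
      by (simp add: divide_inverse mult_ac)
    also have "\<dots> = poch_int a (int K - int L)"
      using False nonzero sign by (simp add: poch_int_def D_def nat_diff_distrib algebra_simps divide_inverse)
    finally show ?thesis ..
  qed
qed

lemma fun_diff_eq_zero_iff:
  fixes p q :: "nat \<Rightarrow> nat"
  assumes "p \<le> q"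
  shows "q - p = (\<lambda>_. 0) \<longleftrightarrow> q = p"
proof -
  have "q s - p s = 0 \<longleftrightarrow> q s = p s" for s
    using le_funD[OF assms, of s] by auto
  then show ?thesis
    by (simp add: fun_eq_iff fun_diff_def)
qed

lemma MI_le:
  assumes "i \<in> MI m" and "i' \<le> i"
  shows "i' \<in> MI m"
proof -
  have "i' s = 0" if "m \<le> s" for s
    using assms that le_funD[OF assms(2), of s] by (simp add: MI_def)
  then show ?thesis
    by (simp add: MI_def)
qed

lemma finite_atMost_MI:
  assumes "i \<in> MI m"
  shows "finite {..i}"
proof -
  let ?extend = "\<lambda>g s. if s < m then g s else 0"
  have "{..i} \<subseteq> ?extend ` PiE {..<m} (\<lambda>s. {0..i s})"
  proof
    fix f assume "f \<in> {..i}"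
    then have le: "f s \<le> i s" for s
      by (simp add: le_fun_def)
    have "f = ?extend (restrict f {..<m})"
      using MI_le[OF assms, of f] le by (auto simp: MI_def le_fun_def)
    moreover have "restrict f {..<m} \<in> PiE {..<m} (\<lambda>s. {0..i s})"
      using le by auto
    ultimately show "f \<in> ?extend ` PiE {..<m} (\<lambda>s. {0..i s})"
      by blast
  qed
  then show ?thesis
    by (rule finite_subset) (simp add: finite_PiE)
qed

lemma finite_MI_absi: "finite {i \<in> MI m. absi m i = k}"
proof -
  let ?bound = "\<lambda>s. if s < m then k else 0"
  have "{i \<in> MI m. absi m i = k} \<subseteq> {..?bound}"
  proof
    fix i assume i: "i \<in> {i \<in> MI m. absi m i = k}"
    have "i s \<le> ?bound s" for s
    proof (cases "s < m")
      case True
      then have "i s \<le> (\<Sum>t<m. i t)"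
        by (intro member_le_sum) auto
      with i True show ?thesis
        by (simp add: absi_def)
    next
      case False
      with i show ?thesis
        by (simp add: MI_def)
    qed
    then show "i \<in> {..?bound}"
      by (simp add: le_fun_def)
  qed
  moreover have "?bound \<in> MI m"
    by (simp add: MI_def)
  ultimately show ?thesis
    using finite_atMost_MI finite_subset by blast
qed

lemma absi_mono: "i0 \<le> i \<Longrightarrow> absi m i0 \<le> absi m i"
  unfolding absi_def le_fun_def by (rule sum_mono) auto

lemma absi_diff: "i0 \<le> i \<Longrightarrow> absi m (i - i0) = absi m i - absi m i0"
  unfolding absi_def le_fun_def fun_diff_def by (rule sum_subtractf_nat) auto

lemma absi_Suc_upd: "absi (Suc m) (i(m := t)) = absi m i + t"
  unfolding absi_def by simp

lemma bij_betw_MI_absi_Suc: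
  "bij_betw (\<lambda>(t, i). i(m := t)) (SIGMA t:{..k}. {i \<in> MI m. absi m i = k - t})
     {i \<in> MI (Suc m). absi (Suc m) i = k}"
proof (rule bij_betw_byWitness[where f' = "\<lambda>i. (i m, i(m := 0))"])
  show "\<forall>p \<in> (SIGMA t:{..k}. {i \<in> MI m. absi m i = k - t}).
      (\<lambda>i. (i m, i(m := 0))) ((\<lambda>(t, i). i(m := t)) p) = p"
    by (auto simp: MI_def)
  show "(\<lambda>(t, i). i(m := t)) ` (SIGMA t:{..k}. {i \<in> MI m. absi m i = k - t})
      \<subseteq> {i \<in> MI (Suc m). absi (Suc m) i = k}"
    by (auto simp: absi_Suc_upd MI_def)
  have "absi m (i(m := 0)) = absi m i" for i
    unfolding absi_def by simp
  moreover have "absi (Suc m) i = absi m i + i m" for i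
    unfolding absi_def by simp
  ultimately show "(\<lambda>i. (i m, i(m := 0))) ` {i \<in> MI (Suc m). absi (Suc m) i = k}
      \<subseteq> (SIGMA t:{..k}. {i \<in> MI m. absi m i = k - t})"
    by (auto simp: MI_def)
qed auto

lemma sum_prod_binomial_MI:
  "(\<Sum>i0\<in>{i' \<in> MI m. absi m i' = k}. \<Prod>s<m. i s choose i0 s) = absi m i choose k"
proof (induction m arbitrary: k)
  case 0
  have "{i' \<in> MI 0. absi 0 i' = k} = (if k = 0 then {\<lambda>_. 0} else {})"
    by (auto simp: MI_def absi_def)
  then show ?case
    by (simp add: absi_def)
next
  case (Suc m)
  have "(\<Sum>i0\<in>{i' \<in> MI (Suc m). absi (Suc m) i' = k}. \<Prod>s<Suc m. i s choose i0 s)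
      = (\<Sum>(t, i')\<in>(SIGMA t:{..k}. {i' \<in> MI m. absi m i' = k - t}). \<Prod>s<Suc m. i s choose (i'(m := t)) s)"
    by (subst sum.reindex_bij_betw[OF bij_betw_MI_absi_Suc, symmetric]) (simp add: case_prod_beta)
  also have "\<dots> = (\<Sum>t\<le>k. \<Sum>i'\<in>{i' \<in> MI m. absi m i' = k - t}.
      (i m choose t) * (\<Prod>s<m. i s choose i' s))"
    by (subst sum.Sigma[symmetric]) (auto simp: finite_MI_absi lessThan_Suc mult.commute intro!: sum.cong prod.cong)
  also have "\<dots> = (\<Sum>t\<le>k. (i m choose t) * (absi m i choose (k - t)))"
    by (simp add: sum_distrib_left[symmetric] Suc.IH)
  also have "\<dots> = absi (Suc m) i choose k"
    by (simp add: vandermonde absi_def add.commute)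
  finally show ?case .
qed

lemma prod_binomial_eq_0:
  assumes "i0 \<in> MI m" and "\<not> i0 \<le> i"
  shows "(\<Prod>s<m. i s choose i0 s) = 0"
proof -
  obtain s where s: "i s < i0 s"
    using assms(2) by (auto simp: le_fun_def not_le)
  have "s < m"
  proof (rule ccontr)
    assume "\<not> s < m"
    with assms(1) have "i0 s = 0"
      by (simp add: MI_def)
    with s show False
      by simp
  qed
  with s show ?thesis
    by (intro prod_zero) (auto simp: binomial_eq_0)
qed

lemma pochv_split:
  "i0 \<le> i \<Longrightarrow> pochv m b i0 * pochv m (\<lambda>s. b s + of_nat (i0 s)) (i - i0) = pochv m b i"
  unfolding pochv_def prod.distrib[symmetric] le_fun_def fun_diff_def
  by (rule prod.cong[OF refl]) (simp add: pochhammer_product[symmetric])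

lemma mfact_split:
  assumes "i0 \<le> i"
  shows "mfact m i0 * mfact m (i - i0) * of_nat (\<Prod>s<m. i s choose i0 s) = mfact m i"
  unfolding mfact_def of_nat_prod prod.distrib[symmetric]
proof (rule prod.cong[OF refl])
  fix s
  have "fact (i0 s) * fact (i s - i0 s) * (i s choose i0 s) = fact (i s)"
    using assms by (intro binomial_fact_lemma) (simp add: le_fun_def)
  then show "fact (i0 s) * fact ((i - i0) s) * of_nat (i s choose i0 s) = (fact (i s) :: complex)"
    by (metis fun_diff_def of_nat_fact of_nat_mult)
qed

lemma pochv_mfact_split:
  assumes "i0 \<le> i"
  shows "pochv m b i0 / pochv m c i0 / mfact m i0
      * (pochv m (\<lambda>s. b s + of_nat (i0 s)) (i - i0) / pochv m (\<lambda>s. c s + of_nat (i0 s)) (i - i0)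
         / mfact m (i - i0))
    = pochv m b i / pochv m c i / mfact m i * of_nat (\<Prod>s<m. i s choose i0 s)"
proof -
  have "(\<Prod>s<m. i s choose i0 s) \<noteq> 0"
    using assms by (force simp: le_fun_def)
  moreover have "mfact m i0 \<noteq> 0" "mfact m (i - i0) \<noteq> 0"
    by (simp_all add: mfact_def)
  ultimately show ?thesis
    unfolding pochv_split[OF assms, of m b, symmetric] pochv_split[OF assms, of m c, symmetric]
      mfact_split[OF assms, of m, symmetric]
    by (simp add: field_simps)
qed

lemma ser_mult_eq: "ser_mult f g i j = (\<Sum>(p, q)\<in>{..i} \<times> {..j}. f p q * g (i - p) (j - q))"
  by (simp add: ser_mult_def atMost_def le_fun_def fun_diff_def case_prod_beta)

lemma ser_mult_monom:
  assumes "i \<in> MI m" and "j \<in> MI n"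
  shows "ser_mult (monom i0 j0 z) F i j = (if i0 \<le> i \<and> j0 \<le> j then z * F (i - i0) (j - j0) else 0)"
proof -
  have "ser_mult (monom i0 j0 z) F i j
      = (\<Sum>x\<in>{..i} \<times> {..j}. if x = (i0, j0) then z * F (i - i0) (j - j0) else 0)"
    unfolding ser_mult_eq by (rule sum.cong[OF refl]) (auto simp: monom_def split: if_splits)
  then show ?thesis
    using finite_atMost_MI[OF assms(1)] finite_atMost_MI[OF assms(2)] by simp
qed

lemma ser_mult_concentrated:
  assumes "i \<in> MI m" and "j \<in> MI n"
    and H: "\<And>p q. p \<le> i \<Longrightarrow> q \<le> j \<Longrightarrow> q \<noteq> j' \<Longrightarrow> H p q = 0"
    and G: "\<And>p q. p \<noteq> (\<lambda>_. 0) \<Longrightarrow> G p q = 0"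
  shows "ser_mult H G i j = (if j' \<le> j then H i j' * G (\<lambda>_. 0) (j - j') else 0)"
proof -
  have summand: "H p q * G (i - p) (j - q) = (if (p, q) = (i, j') then H i j' * G (i - i) (j - j') else 0)"
    if "p \<le> i" and "q \<le> j" for p q
  proof (cases "p = i")
    case True
    then show ?thesis
      using H[OF that] by auto
  next
    case False
    then have "G (i - p) (j - q) = 0"
      using fun_diff_eq_zero_iff[OF \<open>p \<le> i\<close>] by (intro G) simp
    with False show ?thesis
      by simp
  qed
  have "ser_mult H G i j
      = (\<Sum>x\<in>{..i} \<times> {..j}. if x = (i, j') then H i j' * G (i - i) (j - j') else 0)"
    unfolding ser_mult_eq
  proof (rule sum.cong[OF refl])
    fix x
    assume x: "x \<in> {..i} \<times> {..j}"
    obtain p q where x_eq: "x = (p, q)"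
      by fastforce
    with x have "p \<le> i" and "q \<le> j"
      by auto
    then show "(case x of (p, q) \<Rightarrow> H p q * G (i - p) (j - q))
        = (if x = (i, j') then H i j' * G (i - i) (j - j') else 0)"
      unfolding x_eq by (simp add: summand)
  qed
  moreover have "i - i = (\<lambda>_. 0)"
    by (simp add: fun_diff_def)
  ultimately show ?thesis
    using finite_atMost_MI[OF assms(1)] finite_atMost_MI[OF assms(2)] by simp
qed

lemma ser_mult_separated:
  assumes "i \<in> MI m" and "j \<in> MI n"
    and F: "\<And>p q. q \<noteq> (\<lambda>_. 0) \<Longrightarrow> F p q = 0"
    and G: "\<And>p q. p \<noteq> (\<lambda>_. 0) \<Longrightarrow> G p q = 0"
  shows "ser_mult F G i j = F i (\<lambda>_. 0) * G (\<lambda>_. 0) j"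
  using ser_mult_concentrated[OF assms(1,2), where H = F and j' = "\<lambda>_. 0"] F G by (simp add: le_fun_def fun_diff_def)

lemma ser_mult_monom_separated:
  assumes "i \<in> MI m" and "j \<in> MI n"
    and F: "\<And>p q. q \<noteq> (\<lambda>_. 0) \<Longrightarrow> F p q = 0"
    and G: "\<And>p q. p \<noteq> (\<lambda>_. 0) \<Longrightarrow> G p q = 0"
  shows "ser_mult (ser_mult (monom i0 j0 z) F) G i j
    = (if i0 \<le> i \<and> j0 \<le> j then z * F (i - i0) (\<lambda>_. 0) * G (\<lambda>_. 0) (j - j0) else 0)"
proof -
  have "ser_mult (monom i0 j0 z) F p q = 0" if "p \<le> i" "q \<le> j" "q \<noteq> j0" for p q
  proof -
    have "F (p - i0) (q - j0) = 0" if "j0 \<le> q"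
      using fun_diff_eq_zero_iff[OF that] \<open>q \<noteq> j0\<close> by (intro F) simp
    then show ?thesis
      using ser_mult_monom[OF MI_le[OF assms(1) that(1)] MI_le[OF assms(2) that(2)], of i0 j0 z F]
      by simp
  qed
  then have "ser_mult (ser_mult (monom i0 j0 z) F) G i j
      = (if j0 \<le> j then ser_mult (monom i0 j0 z) F i j0 * G (\<lambda>_. 0) (j - j0) else 0)"
    by (rule ser_mult_concentrated[OF assms(1,2) _ G])
  also have "\<dots> = (if i0 \<le> i \<and> j0 \<le> j then z * F (i - i0) (\<lambda>_. 0) * G (\<lambda>_. 0) (j - j0) else 0)"
  proof (cases "j0 \<le> j")
    case True
    then show ?thesis
      using ser_mult_monom[OF assms(1) MI_le[OF assms(2) True]] by (simp add: fun_diff_def)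
  qed simp
  finally show ?thesis .
qed

lemma lauricellaFA_eq_0: "j \<noteq> (\<lambda>_. 0) \<Longrightarrow> lauricellaFA m a b c i j = 0"
  by (auto simp: lauricellaFA_def fun_eq_iff)

lemma besselJ_eq_0: "i \<noteq> (\<lambda>_. 0) \<Longrightarrow> besselJ n \<alpha> i j = 0"
  by (auto simp: besselJ_def fun_eq_iff)

lemma ser_mult_lauricellaFA_besselJ:
  assumes "i \<in> MI m" and "j \<in> MI n"
  shows "ser_mult (lauricellaFA m' a b c) (besselJ n' \<alpha>) i j
    = lauricellaFA m' a b c i (\<lambda>_. 0) * besselJ n' \<alpha> (\<lambda>_. 0) j"
  by (rule ser_mult_separated[OF assms]) (simp_all add: lauricellaFA_eq_0 besselJ_eq_0)

lemma ser_mult_monom_lauricellaFA_besselJ: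
  assumes "i \<in> MI m" and "j \<in> MI n"
  shows "ser_mult (ser_mult (monom i0 j0 z) (lauricellaFA m' a b c)) (besselJ n' \<alpha>) i j
    = (if i0 \<le> i \<and> j0 \<le> j
       then z * lauricellaFA m' a b c (i - i0) (\<lambda>_. 0) * besselJ n' \<alpha> (\<lambda>_. 0) (j - j0) else 0)"
  by (rule ser_mult_monom_separated[OF assms]) (simp_all add: lauricellaFA_eq_0 besselJ_eq_0)

definition expansion_term ::
    "nat \<Rightarrow> nat \<Rightarrow> complex \<Rightarrow> (nat \<Rightarrow> complex) \<Rightarrow> (nat \<Rightarrow> complex)
      \<Rightarrow> nat \<Rightarrow> nat \<Rightarrow> mi \<Rightarrow> mi \<Rightarrow> ser" where
  "expansion_term m n a b c k l i0 j0 =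
     ser_mult (ser_mult
       (monom i0 j0
          ((-1) ^ (k + l) * fact k * fact (k - 1) * pochv m b i0
           / (fact (l - 1) * fact (k - l) * pochhammer (1 - a) l * pochv m c i0)
           / (mfact m i0 * mfact n j0)))
       (lauricellaFA m (a + of_nat k) (\<lambda>s. b s + of_nat (i0 s)) (\<lambda>s. c s + of_nat (i0 s))))
       (besselJ n (- a + of_nat l))"

lemma expansion_term_coeff:
  assumes "i \<in> MI m" and "j \<in> MI n"
    and "i0 \<in> MI m" and "absi m i0 = k" and "j0 \<in> MI n" and "absi n j0 = l"
  shows "expansion_term m n a b c k l i0 j0 i j
    = (-1)^(k + absi n j) * (fact k * fact (k - 1) / (fact (l - 1) * fact (k - l)))
      * pochhammer (a + of_nat k) (absi m i - k) / pochhammer (1 - a) (absi n j)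
      * (pochv m b i / pochv m c i / mfact m i / mfact n j)
      * of_nat (\<Prod>s<m. i s choose i0 s) * of_nat (\<Prod>s<n. j s choose j0 s)"
proof (cases "i0 \<le> i \<and> j0 \<le> j")
  case False
  then have "(\<Prod>s<m. i s choose i0 s) = 0 \<or> (\<Prod>s<n. j s choose j0 s) = 0"
    using prod_binomial_eq_0[OF assms(3), of i] prod_binomial_eq_0[OF assms(5), of j] by auto
  with False show ?thesis
    unfolding expansion_term_def
    by (auto simp: ser_mult_monom_lauricellaFA_besselJ[OF assms(1,2)])
next
  case True
  then have "i0 \<le> i" and "j0 \<le> j"
    by auto
  define L where "L = absi n j"
  have "l \<le> L"
    using absi_mono[OF \<open>j0 \<le> j\<close>, of n] assms(6) by (simp add: L_def)
  have x_part: "pochv m b i0 / pochv m c i0 / mfact m i0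
      * lauricellaFA m (a + of_nat k) (\<lambda>s. b s + of_nat (i0 s)) (\<lambda>s. c s + of_nat (i0 s)) (i - i0) (\<lambda>_. 0)
    = pochhammer (a + of_nat k) (absi m i - k)
      * (pochv m b i / pochv m c i / mfact m i * of_nat (\<Prod>s<m. i s choose i0 s))"
  proof -
    have "lauricellaFA m (a + of_nat k) (\<lambda>s. b s + of_nat (i0 s)) (\<lambda>s. c s + of_nat (i0 s)) (i - i0) (\<lambda>_. 0)
        = pochhammer (a + of_nat k) (absi m i - k)
          * (pochv m (\<lambda>s. b s + of_nat (i0 s)) (i - i0) / pochv m (\<lambda>s. c s + of_nat (i0 s)) (i - i0)
             / mfact m (i - i0))"
      using absi_diff[OF \<open>i0 \<le> i\<close>, of m] assms(4) by (simp add: lauricellaFA_def)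
    then show ?thesis
      using pochv_mfact_split[OF \<open>i0 \<le> i\<close>, of m b c] by (simp add: divide_inverse mult_ac)
  qed
  have y_part: "besselJ n (- a + of_nat l) (\<lambda>_. 0) (j - j0) / (pochhammer (1 - a) l * mfact n j0)
    = (-1)^(L - l) / pochhammer (1 - a) L / mfact n j * of_nat (\<Prod>s<n. j s choose j0 s)"
  proof -
    have "pochhammer (1 - a) L = pochhammer (1 - a) l * pochhammer (1 + (- a + of_nat l)) (L - l)"
      using pochhammer_product[OF \<open>l \<le> L\<close>, of "1 - a"] by (simp add: algebra_simps)
    moreover have "(\<Prod>s<n. j s choose j0 s) \<noteq> 0"
      using \<open>j0 \<le> j\<close> by (force simp: le_fun_def)
    ultimately show ?thesis
      using absi_diff[OF \<open>j0 \<le> j\<close>, of n] assms(6)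
      unfolding mfact_split[OF \<open>j0 \<le> j\<close>, of n, symmetric]
      by (simp add: besselJ_def L_def divide_inverse mult_ac)
  qed
  have sign: "(-1 :: complex)^(k + l) * (-1)^(L - l) = (-1)^(k + L)"
    using \<open>l \<le> L\<close> by (simp flip: power_add)
  have "expansion_term m n a b c k l i0 j0 i j
      = (-1)^(k + l) * (fact k * fact (k - 1) / (fact (l - 1) * fact (k - l)))
        * (pochv m b i0 / pochv m c i0 / mfact m i0
           * lauricellaFA m (a + of_nat k) (\<lambda>s. b s + of_nat (i0 s)) (\<lambda>s. c s + of_nat (i0 s)) (i - i0) (\<lambda>_. 0))
        * (besselJ n (- a + of_nat l) (\<lambda>_. 0) (j - j0) / (pochhammer (1 - a) l * mfact n j0))"
    unfolding expansion_term_def ser_mult_monom_lauricellaFA_besselJ[OF assms(1,2)]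
    using True by (simp add: divide_inverse mult_ac)
  also have "\<dots> = ((-1)^(k + l) * (-1)^(L - l)) * (fact k * fact (k - 1) / (fact (l - 1) * fact (k - l)))
      * pochhammer (a + of_nat k) (absi m i - k) / pochhammer (1 - a) L
      * (pochv m b i / pochv m c i / mfact m i / mfact n j)
      * of_nat (\<Prod>s<m. i s choose i0 s) * of_nat (\<Prod>s<n. j s choose j0 s)"
    unfolding x_part y_part by (simp add: divide_inverse mult_ac)
  finally show ?thesis
    unfolding L_def[symmetric] sign .
qed

definition expansion_sum ::
    "nat \<Rightarrow> nat \<Rightarrow> complex \<Rightarrow> (nat \<Rightarrow> complex) \<Rightarrow> (nat \<Rightarrow> complex)
      \<Rightarrow> nat \<Rightarrow> ser" where
  "expansion_sum m n a b c k = (\<lambda>i j. \<Sum>l\<in>{1..k}. \<Sum>i0\<in>{i' \<in> MI m. absi m i' = k}.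
     \<Sum>j0\<in>{j' \<in> MI n. absi n j' = l}. expansion_term m n a b c k l i0 j0 i j)"

lemma expansion_sum_coeff:
  assumes "i \<in> MI m" and "j \<in> MI n" and "1 \<le> k"
  shows "expansion_sum m n a b c k i j
    = pochv m b i / pochv m c i / mfact m i / mfact n j * (-1)^absi n j / pochhammer (1 - a) (absi n j)
      * ((-1)^k * of_nat (absi m i choose k) * pochhammer (of_nat (absi n j)) k
         * pochhammer (a + of_nat k) (absi m i - k))"
proof -
  define X where "X = (-1)^(k + absi n j) * pochhammer (a + of_nat k) (absi m i - k)
    / pochhammer (1 - a) (absi n j) * (pochv m b i / pochv m c i / mfact m i / mfact n j)"
  have "(\<Sum>i0\<in>{i' \<in> MI m. absi m i' = k}. \<Sum>j0\<in>{j' \<in> MI n. absi n j' = l}.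
           expansion_term m n a b c k l i0 j0 i j)
      = X * (fact k * fact (k - 1) / (fact (l - 1) * fact (k - l)))
        * ((\<Sum>i0\<in>{i' \<in> MI m. absi m i' = k}. of_nat (\<Prod>s<m. i s choose i0 s))
           * (\<Sum>j0\<in>{j' \<in> MI n. absi n j' = l}. of_nat (\<Prod>s<n. j s choose j0 s)))" for l
  proof -
    have "(\<Sum>i0\<in>{i' \<in> MI m. absi m i' = k}. \<Sum>j0\<in>{j' \<in> MI n. absi n j' = l}.
           expansion_term m n a b c k l i0 j0 i j)
      = (\<Sum>i0\<in>{i' \<in> MI m. absi m i' = k}. \<Sum>j0\<in>{j' \<in> MI n. absi n j' = l}.
           X * (fact k * fact (k - 1) / (fact (l - 1) * fact (k - l)))
           * (of_nat (\<Prod>s<m. i s choose i0 s) * of_nat (\<Prod>s<n. j s choose j0 s)))"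
      by (intro sum.cong refl) (simp add: expansion_term_coeff[OF assms(1,2)] X_def divide_inverse mult_ac)
    then show ?thesis
      by (subst sum_product) (simp only: sum_distrib_left)
  qed
  also have "\<dots> l = X * (fact k * fact (k - 1) / (fact (l - 1) * fact (k - l)))
      * (of_nat (absi m i choose k) * of_nat (absi n j choose l))" for l
    by (simp only: of_nat_sum[symmetric] sum_prod_binomial_MI)
  finally have "expansion_sum m n a b c k i j
      = X * of_nat (absi m i choose k)
        * (\<Sum>l\<in>{1..k}. fact k * fact (k - 1) / (fact (l - 1) * fact (k - l)) * of_nat (absi n j choose l))"
    by (simp add: expansion_sum_def sum_distrib_left mult_ac)
  also have "\<dots> = X * of_nat (absi m i choose k) * pochhammer (of_nat (absi n j)) k"
    by (simp only: sum_binomial_eq_pochhammer[OF assms(3)])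
  finally show ?thesis
    by (simp add: X_def power_add mult_ac)
qed

lemma expansion_sum_eq_0:
  assumes "i \<in> MI m" and "j \<in> MI n" and "absi m i < k"
  shows "expansion_sum m n a b c k i j = 0"
  using assms expansion_sum_coeff[OF assms(1,2), of k] by simp

lemma confluentHA_coeff:
  assumes "a \<notin> \<int>" and "i \<in> MI m" and "j \<in> MI n"
  shows "confluentHA m n a b c i j
    = ser_mult (lauricellaFA m a b c) (besselJ n (- a)) i j + (\<Sum>k\<in>{1..absi m i}. expansion_sum m n a b c k i j)"
proof -
  define P where "P = pochv m b i / pochv m c i / mfact m i / mfact n j
    * (-1)^absi n j / pochhammer (1 - a) (absi n j)"
  define B where "B k = (-1)^k * of_nat (absi m i choose k) * pochhammer (of_nat (absi n j)) k
    * pochhammer (a + of_nat k) (absi m i - k)" for k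
  have "confluentHA m n a b c i j = pochv m b i / pochv m c i / mfact m i / mfact n j
      * (pochhammer (a - of_nat (absi n j)) (absi m i) * (-1)^absi n j / pochhammer (1 - a) (absi n j))"
    unfolding confluentHA_def poch_int_diff[OF assms(1)] by (simp add: divide_inverse mult_ac)
  also have "\<dots> = P * (\<Sum>k\<le>absi m i. B k)"
    unfolding chu_vandermonde_binomial[OF assms(1), symmetric] P_def B_def
    by (simp add: divide_inverse mult_ac)
  also have "\<dots> = P * B 0 + (\<Sum>k\<in>{1..absi m i}. P * B k)"
    by (simp add: sum_distrib_left distrib_left atMost_atLeast0 sum.atLeast_Suc_atMost)
  also have "\<dots> = ser_mult (lauricellaFA m a b c) (besselJ n (- a)) i j
      + (\<Sum>k\<in>{1..absi m i}. expansion_sum m n a b c k i j)"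
    unfolding ser_mult_lauricellaFA_besselJ[OF assms(2,3)]
    using assms(2,3) by (simp add: expansion_sum_coeff lauricellaFA_def besselJ_def P_def B_def divide_inverse mult_ac)
  finally show ?thesis .
qed

theorem mainTheorem15:
  fixes m n :: nat and a :: complex and b c :: "nat \<Rightarrow> complex"
  assumes "a \<notin> \<int>"
    and "\<forall>s<m. \<forall>k::nat. c s \<noteq> - of_nat k"
  shows "\<exists>S. ser_sums m n
      (\<lambda>k i j. \<Sum>l\<in>{1..k}. \<Sum>i0\<in>{i'\<in>MI m. absi m i' = k}. \<Sum>j0\<in>{j'\<in>MI n. absi n j' = l}.
         ser_mult (ser_mult
           (monom i0 j0
              ((-1) ^ (k + l) * fact k * fact (k - 1) * pochv m b i0
               / (fact (l - 1) * fact (k - l) * pochhammer (1 - a) l * pochv m c i0)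
               / (mfact m i0 * mfact n j0)))
           (lauricellaFA m (a + of_nat k) (\<lambda>s. b s + of_nat (i0 s)) (\<lambda>s. c s + of_nat (i0 s))))
           (besselJ n (- a + of_nat l)) i j)
      S
    \<and> ser_eq m n (confluentHA m n a b c)
        (\<lambda>i j. ser_mult (lauricellaFA m a b c) (besselJ n (- a)) i j + S i j)"
proof -
  define S where "S i j = (\<Sum>k\<in>{1..absi m i}. expansion_sum m n a b c k i j)" for i j
  have "ser_sums m n (expansion_sum m n a b c) S"
    unfolding ser_sums_def
  proof (intro ballI exI allI impI)
    fix i j K
    assume "i \<in> MI m" and "j \<in> MI n" and "absi m i \<le> K"
    then show "(\<Sum>k\<in>{1..K}. expansion_sum m n a b c k i j) = S i j"
      unfolding S_def by (intro sum.mono_neutral_right) (auto simp: expansion_sum_eq_0)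
  qed
  moreover have "ser_eq m n (confluentHA m n a b c)
      (\<lambda>i j. ser_mult (lauricellaFA m a b c) (besselJ n (- a)) i j + S i j)"
    unfolding ser_eq_def S_def by (simp add: confluentHA_coeff[OF assms(1)])
  ultimately show ?thesis
    unfolding expansion_sum_def expansion_term_def by blast
qed

end
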